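(* Let $t\in(0,1/2)$ and $s\geq 1$. For $a,b>0$ define $$Q_{t,s}(a,b)=G^{s}\big(ta+(1-t)b,\ tb+(1-t)a\big)\,A^{1-s}(a,b).$$ Then the inequality $Q_{t,s}(a,b)>AG(a,b)$ holds for all $a,b>0$ with $a\neq b$ if and only if $t\geq \frac12-\frac{\sqrt{2s}}{4s}$.
   Context: For $a,b>0$: $G(a,b)=\sqrt{ab}$ is the geometric mean and $A(a,b)=(a+b)/2$ is the arithmetic mean. $AG(a,b)$ is the arithmetic-geometric mean: the common limit of the sequences defined by $a_0=a$, $b_0=b$, $a_{n+1}=(a_n+b_n)/2$, $b_{n+1}=\sqrt{a_nb_n}$. *)

theory Defs
  imports "HOL-Analysis.Analysis"
begin

definition GM :: "real \<Rightarrow> real \<Rightarrow> real" where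
  "GM a b = sqrt (a * b)"

definition AM :: "real \<Rightarrow> real \<Rightarrow> real" where
  "AM a b = (a + b) / 2"

fun agm_seq :: "real \<Rightarrow> real \<Rightarrow> nat \<Rightarrow> real \<times> real" where
  "agm_seq a b 0 = (a, b)"
| "agm_seq a b (Suc n) = (let (x, y) = agm_seq a b n in (AM x y, GM x y))"

definition AGM :: "real \<Rightarrow> real \<Rightarrow> real" where
  "AGM a b = lim (\<lambda>n. fst (agm_seq a b n))"

definition Q :: "real \<Rightarrow> real \<Rightarrow> real \<Rightarrow> real \<Rightarrow> real" where
  "Q t s a b = GM (t * a + (1 - t) * b) (t * b + (1 - t) * a) powr s * AM a b powr (1 - s)"

end

theory Submission
  imports Defs
begin

text \<open>
  Write \<open>A = AM a b\<close>, \<open>w = GM a b / A\<close> and \<open>r = 1 - 2t\<close>. Since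
  \<open>(ta + (1-t)b)(tb + (1-t)a) = A\<^sup>2(1 - r\<^sup>2(1 - w\<^sup>2))\<close>, we get
  \<open>Q t s a b = A \<phi>(w)\<close> with \<open>\<phi>(w) = (1 - r\<^sup>2(1 - w\<^sup>2))\<^bsup>s/2\<^esup>\<close>, while the second
  AGM iterates give \<open>A \<surd>w \<le> AGM a b \<le> A (1 + w)/2\<close>.
  If \<open>r\<^sup>2 \<le> 1/(2s)\<close>, Bernoulli's inequality yields \<open>\<phi>(w)\<^sup>2 \<ge> (1 + w\<^sup>2)/2 > ((1 + w)/2)\<^sup>2\<close>.
  If \<open>k = 2sr\<^sup>2 > 1\<close>, then at \<open>w = k\<^bsup>-1/2\<^esup>\<close> (realized by \<open>a, b = 1 \<plusminus> \<surd>(1 - w\<^sup>2)\<close>)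
  the bounds \<open>1 + x \<le> e\<^sup>x\<close> and \<open>k \<le> e\<^bsup>k-1\<^esup>\<close> give \<open>\<phi>(w) \<le> e\<^bsup>-(k-1)/4\<^esup> \<le> k\<^bsup>-1/4\<^esup> = \<surd>w\<close>.
\<close>

lemma agm_seq_Suc:
  "agm_seq a b (Suc n) =
     (AM (fst (agm_seq a b n)) (snd (agm_seq a b n)), GM (fst (agm_seq a b n)) (snd (agm_seq a b n)))"
  by (simp add: case_prod_beta Let_def)

declare agm_seq.simps(2)[simp del]

lemma agm_seq_pos:
  assumes "0 < a" "0 < b"
  shows "0 < fst (agm_seq a b n) \<and> 0 < snd (agm_seq a b n)"
  using assms by (induction n) (auto simp: agm_seq_Suc AM_def GM_def)

lemma agm_seq_snd_le_fst:
  assumes "0 < a" "0 < b"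
  shows "snd (agm_seq a b (Suc n)) \<le> fst (agm_seq a b (Suc n))"
  using agm_seq_pos[OF assms, of n] arith_geo_mean_sqrt[of "fst (agm_seq a b n)" "snd (agm_seq a b n)"]
  by (simp add: agm_seq_Suc AM_def GM_def)

lemma agm_seq_fst_decreasing:
  assumes "0 < a" "0 < b"
  shows "fst (agm_seq a b (Suc (Suc n))) \<le> fst (agm_seq a b (Suc n))"
  using agm_seq_snd_le_fst[OF assms, of n] by (simp add: agm_seq_Suc[of _ _ "Suc n"] AM_def)

lemma agm_seq_snd_increasing:
  assumes "0 < a" "0 < b"
  shows "snd (agm_seq a b (Suc n)) \<le> snd (agm_seq a b (Suc (Suc n)))"
proof -
  let ?x = "fst (agm_seq a b (Suc n))" and ?y = "snd (agm_seq a b (Suc n))"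
  have "?y \<le> ?x" "0 < ?y"
    using agm_seq_snd_le_fst[OF assms, of n] agm_seq_pos[OF assms, of "Suc n"] by auto
  hence "sqrt (?y * ?y) \<le> sqrt (?x * ?y)" by (intro real_sqrt_le_mono mult_right_mono) auto
  thus ?thesis using \<open>0 < ?y\<close> by (simp add: agm_seq_Suc[of _ _ "Suc n"] GM_def)
qed

lemma AGM_between_iterates:
  assumes "0 < a" "0 < b"
  shows "snd (agm_seq a b (Suc n)) \<le> AGM a b \<and> AGM a b \<le> fst (agm_seq a b (Suc n))"
proof -
  let ?x = "\<lambda>n. fst (agm_seq a b (Suc n))" and ?y = "\<lambda>n. snd (agm_seq a b (Suc n))"
  have dec: "decseq ?x" using agm_seq_fst_decreasing[OF assms] by (intro decseq_SucI) auto
  have inc: "incseq ?y" using agm_seq_snd_increasing[OF assms] by (intro incseq_SucI) auto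
  obtain L where L: "?x \<longlonglongrightarrow> L" "\<And>i. L \<le> ?x i"
    using decseq_convergent[OF dec, of 0] agm_seq_pos[OF assms] by (metis less_imp_le)
  have "(\<lambda>n. fst (agm_seq a b n)) \<longlonglongrightarrow> L" using L(1) by (rule LIMSEQ_imp_Suc)
  hence "AGM a b = L" unfolding AGM_def by (rule limI)
  moreover have "?y n \<le> L"
  proof (rule LIMSEQ_le_const[OF L(1)], intro exI allI impI)
    fix m assume "n \<le> m"
    then have "?y n \<le> ?y m" using incseqD[OF inc] by blast
    also have "\<dots> \<le> ?x m" by (rule agm_seq_snd_le_fst[OF assms])
    finally show "?y n \<le> ?x m" .
  qed
  ultimately show ?thesis using L(2)[of n] by simp
qed

lemma AGM_bounds:
  assumes "0 < a" "0 < b"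
  shows "GM (AM a b) (GM a b) \<le> AGM a b \<and> AGM a b \<le> AM (AM a b) (GM a b)"
  using AGM_between_iterates[OF assms, of 1] by (simp add: agm_seq_Suc)

lemma GM_less_AM:
  assumes "0 < a" "0 < b" "a \<noteq> b"
  shows "GM a b < AM a b"
proof -
  have "(AM a b)\<^sup>2 - (GM a b)\<^sup>2 = ((a - b) / 2)\<^sup>2"
    using assms by (simp add: AM_def GM_def power2_eq_square field_simps)
  moreover have "0 < ((a - b) / 2)\<^sup>2" using assms by simp
  ultimately have "(GM a b)\<^sup>2 < (AM a b)\<^sup>2" by linarith
  moreover have "0 \<le> AM a b" using assms by (simp add: AM_def)
  ultimately show ?thesis by (rule power_less_imp_less_base)
qed

lemma AM_GM_realizable:
  assumes "0 < w" "w < 1"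
  shows "\<exists>a b. 0 < a \<and> 0 < b \<and> a \<noteq> b \<and> AM a b = 1 \<and> GM a b = w"
proof (intro exI conjI)
  define d where "d = sqrt (1 - w\<^sup>2)"
  have "0 < d" "d < 1" using assms by (auto simp: d_def power_less_one_iff)
  then show "0 < 1 + d" "0 < 1 - d" "1 + d \<noteq> 1 - d" "AM (1 + d) (1 - d) = 1" by (auto simp: AM_def)
  have "d\<^sup>2 = 1 - w\<^sup>2" using assms by (simp add: d_def power_le_one)
  then have "(1 + d) * (1 - d) = w\<^sup>2" by (simp add: algebra_simps power2_eq_square)
  then show "GM (1 + d) (1 - d) = w" using assms by (simp add: GM_def)
qed

lemma Bernoulli_inequality_powr:
  fixes s x :: real
  assumes "1 \<le> s" "0 < x"
  shows "1 + s * (x - 1) \<le> x powr s"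
proof -
  have "(x powr s) powr (1/s) * 1 powr (1 - 1/s) \<le> (1/s) * (x powr s) + (1 - 1/s) * 1"
    using assms by (intro Youngs_inequality_0) auto
  hence "x \<le> (x powr s) / s + 1 - 1/s" using assms by (simp add: powr_powr)
  hence "s * x \<le> s * ((x powr s) / s + 1 - 1/s)" using assms by simp
  thus ?thesis using assms by (simp add: algebra_simps)
qed

lemma Q_eq_AM_mult:
  assumes "0 < a" "0 < b" "0 \<le> t" "t \<le> 1"
  shows "Q t s a b = AM a b * (1 - (1 - 2*t)\<^sup>2 * (1 - (GM a b / AM a b)\<^sup>2)) powr (s/2)"
proof -
  define A where "A = AM a b"
  define P where "P = (t * a + (1 - t) * b) * (t * b + (1 - t) * a)"
  define u where "u = 1 - (1 - 2*t)\<^sup>2 * (1 - (GM a b / A)\<^sup>2)"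
  have A: "0 < A" using assms by (simp add: A_def AM_def)
  have "0 < t * a + (1 - t) * b" "0 < t * b + (1 - t) * a"
    using assms by (cases "t = 1"; auto intro: add_nonneg_pos)+
  then have P: "0 < P" by (simp add: P_def)
  have "A\<^sup>2 * u = A\<^sup>2 - (1 - 2*t)\<^sup>2 * (A\<^sup>2 - (GM a b)\<^sup>2)"
    using A by (simp add: u_def power_divide field_simps)
  also have "\<dots> = P"
    using assms by (simp add: A_def AM_def GM_def P_def power2_eq_square field_simps)
  finally have u: "0 < u" "P = A\<^sup>2 * u" using A P by (auto simp: zero_less_mult_iff)
  have "sqrt P = A * u powr (1/2)" using A u by (simp add: real_sqrt_mult powr_half_sqrt)
  then have "sqrt P powr s = A powr s * u powr (s/2)" using A u by (simp add: powr_mult powr_powr)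
  then have "Q t s a b = A powr s * A powr (1 - s) * u powr (s/2)"
    unfolding Q_def GM_def P_def[symmetric] A_def[symmetric] by simp
  also have "\<dots> = A * u powr (s/2)" using A by (simp flip: powr_add)
  finally show ?thesis unfolding A_def u_def .
qed

lemma half_one_plus_less_powr:
  fixes r s w :: real
  assumes "1 \<le> s" "r\<^sup>2 \<le> 1 / (2 * s)" "0 \<le> w" "w < 1"
  shows "(1 + w) / 2 < (1 - r\<^sup>2 * (1 - w\<^sup>2)) powr (s/2)"
proof -
  define u where "u = 1 - r\<^sup>2 * (1 - w\<^sup>2)"
  define v where "v = 1 - (1 - w\<^sup>2) / (2 * s)"
  have w: "0 < 1 - w\<^sup>2" "1 - w\<^sup>2 \<le> 1" using assms by (auto simp: power_less_one_iff)
  have "v \<le> u" using mult_right_mono[OF assms(2), of "1 - w\<^sup>2"] w by (simp add: u_def v_def)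
  have "1 - w\<^sup>2 < 2 * s" using assms(1) w(2) by linarith
  then have "(1 - w\<^sup>2) / (2 * s) < 1" using assms(1) by (simp add: field_simps)
  then have "0 < v" by (simp add: v_def)
  have "(1 + w\<^sup>2) / 2 = 1 + s * (v - 1)" using assms by (simp add: v_def field_simps)
  also have "\<dots> \<le> v powr s" by (rule Bernoulli_inequality_powr[OF assms(1) \<open>0 < v\<close>])
  also have "\<dots> \<le> u powr s" using \<open>0 < v\<close> \<open>v \<le> u\<close> assms(1) by (intro powr_mono2) auto
  finally have "sqrt ((1 + w\<^sup>2) / 2) \<le> sqrt (u powr s)" by (rule real_sqrt_le_mono)
  also have "\<dots> = u powr (s/2)" using \<open>0 < v\<close> \<open>v \<le> u\<close> by (simp add: powr_half_sqrt_powr)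
  finally have "sqrt ((1 + w\<^sup>2) / 2) \<le> u powr (s/2)" .
  moreover have "(1 + w) / 2 < sqrt ((1 + w\<^sup>2) / 2)"
  proof (rule real_less_rsqrt)
    have "0 < (1 - w)\<^sup>2" using assms by simp
    then show "((1 + w) / 2)\<^sup>2 < (1 + w\<^sup>2) / 2" by (simp add: power2_eq_square field_simps)
  qed
  ultimately show ?thesis by (simp add: u_def)
qed

lemma exists_powr_le_sqrt:
  fixes r s :: real
  assumes "0 < s" "r\<^sup>2 \<le> 1" "1 / (2 * s) < r\<^sup>2"
  shows "\<exists>w. 0 < w \<and> w < 1 \<and> (1 - r\<^sup>2 * (1 - w\<^sup>2)) powr (s/2) \<le> sqrt w"
proof (intro exI conjI)
  define k where "k = 2 * s * r\<^sup>2"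
  define w where "w = k powr (-1/2)"
  have "1 < k" using assms by (simp add: k_def field_simps)
  then show "0 < w" "w < 1" by (auto simp: w_def powr_less_one)
  have "w\<^sup>2 = (k powr (-1/2)) powr 2" using \<open>0 < w\<close> by (simp add: w_def powr_numeral)
  also have "\<dots> = 1 / k" using \<open>1 < k\<close> by (simp add: powr_powr powr_neg_one)
  finally have r_w: "r\<^sup>2 * (1 - w\<^sup>2) = (k - 1) / (2 * s)"
    using \<open>1 < k\<close> assms by (auto simp: k_def field_simps)
  have "r\<^sup>2 * (1 - w\<^sup>2) \<le> 1 - w\<^sup>2" using \<open>0 < w\<close> \<open>w < 1\<close> assms
    by (intro mult_left_le_one_le) (auto simp: power_le_one)
  then have u: "0 < 1 - r\<^sup>2 * (1 - w\<^sup>2)" using \<open>0 < w\<close> by (smt (verit) zero_less_power)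
  have "(1 - r\<^sup>2 * (1 - w\<^sup>2)) powr (s/2) \<le> exp (- (r\<^sup>2 * (1 - w\<^sup>2))) powr (s/2)"
    using u assms exp_ge_add_one_self[of "- (r\<^sup>2 * (1 - w\<^sup>2))"] by (intro powr_mono2) auto
  also have "\<dots> = exp (k - 1) powr (-1/4)" using assms by (simp add: r_w exp_powr_real field_simps)
  also have "\<dots> \<le> k powr (-1/4)"
    using \<open>1 < k\<close> exp_ge_add_one_self[of "k - 1"] by (intro powr_mono2') auto
  also have "\<dots> = sqrt w" using \<open>1 < k\<close> by (simp add: w_def powr_powr flip: powr_half_sqrt)
  finally show "(1 - r\<^sup>2 * (1 - w\<^sup>2)) powr (s/2) \<le> sqrt w" .
qed

lemma AGM_less_Q:
  assumes "1 \<le> s" "0 \<le> t" "t \<le> 1" "(1 - 2*t)\<^sup>2 \<le> 1 / (2 * s)"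
    and "0 < a" "0 < b" "a \<noteq> b"
  shows "AGM a b < Q t s a b"
proof -
  define A where "A = AM a b"
  define w where "w = GM a b / A"
  have "0 < A" using assms by (simp add: A_def AM_def)
  then have w: "0 \<le> w" "w < 1"
    using GM_less_AM[OF assms(5-7)] assms by (auto simp: w_def A_def GM_def)
  have "AGM a b \<le> AM A (GM a b)" using AGM_bounds[OF assms(5,6)] by (simp add: A_def)
  also have "\<dots> = A * ((1 + w) / 2)" using \<open>0 < A\<close> by (simp add: AM_def w_def field_simps)
  also have "\<dots> < A * (1 - (1 - 2*t)\<^sup>2 * (1 - w\<^sup>2)) powr (s/2)"
    using half_one_plus_less_powr[OF assms(1,4) w] \<open>0 < A\<close> by simp
  also have "\<dots> = Q t s a b" using Q_eq_AM_mult[OF assms(5,6,2,3)] by (simp add: A_def w_def)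
  finally show ?thesis .
qed

lemma exists_Q_le_AGM:
  assumes "0 < s" "0 \<le> t" "t \<le> 1" "1 / (2 * s) < (1 - 2*t)\<^sup>2"
  shows "\<exists>a b. 0 < a \<and> 0 < b \<and> a \<noteq> b \<and> Q t s a b \<le> AGM a b"
proof -
  have "(1 - 2*t)\<^sup>2 \<le> 1" using assms(2,3) by (simp add: abs_square_le_1)
  then obtain w where w: "0 < w" "w < 1" "(1 - (1 - 2*t)\<^sup>2 * (1 - w\<^sup>2)) powr (s/2) \<le> sqrt w"
    using exists_powr_le_sqrt[OF assms(1) _ assms(4)] by blast
  obtain a b where ab: "0 < a" "0 < b" "a \<noteq> b" "AM a b = 1" "GM a b = w"
    using AM_GM_realizable[OF w(1,2)] by blast
  have "Q t s a b \<le> sqrt w" using Q_eq_AM_mult[OF ab(1,2) assms(2,3)] w(3) unfolding ab(4,5) by simp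
  also have "\<dots> = GM (AM a b) (GM a b)" using ab(4,5) by (simp add: GM_def[of 1 w])
  also have "\<dots> \<le> AGM a b" using AGM_bounds[OF ab(1,2)] by simp
  finally show ?thesis using ab(1-3) by blast
qed

lemma half_minus_sqrt_le_iff:
  assumes "0 < s" "t < 1/2"
  shows "1/2 - sqrt (2 * s) / (4 * s) \<le> t \<longleftrightarrow> (1 - 2*t)\<^sup>2 \<le> 1 / (2 * s)"
proof -
  have "sqrt (2 * s) / (4 * s) = sqrt (1 / (2 * s)) / 2"
    using assms(1) by (simp add: real_sqrt_divide field_simps flip: real_sqrt_mult)
  then have "1/2 - sqrt (2 * s) / (4 * s) \<le> t \<longleftrightarrow> sqrt ((1 - 2*t)\<^sup>2) \<le> sqrt (1 / (2 * s))"
    using assms(2) by auto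
  then show ?thesis by (simp only: real_sqrt_le_iff)
qed

theorem theorem1p1:
  fixes t s :: real
  assumes "0 < t" and "t < 1/2" and "1 \<le> s"
  shows "(\<forall>a b. 0 < a \<longrightarrow> 0 < b \<longrightarrow> a \<noteq> b \<longrightarrow> Q t s a b > AGM a b)
         \<longleftrightarrow> t \<ge> 1/2 - sqrt (2 * s) / (4 * s)"
proof -
  have "0 < s" "0 \<le> t" "t \<le> 1" using assms by auto
  have "(\<forall>a b. 0 < a \<longrightarrow> 0 < b \<longrightarrow> a \<noteq> b \<longrightarrow> Q t s a b > AGM a b)
        \<longleftrightarrow> (1 - 2*t)\<^sup>2 \<le> 1 / (2 * s)"
  proof
    assume "\<forall>a b. 0 < a \<longrightarrow> 0 < b \<longrightarrow> a \<noteq> b \<longrightarrow> Q t s a b > AGM a b"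
    then show "(1 - 2*t)\<^sup>2 \<le> 1 / (2 * s)"
      using exists_Q_le_AGM[OF \<open>0 < s\<close> \<open>0 \<le> t\<close> \<open>t \<le> 1\<close>] by (meson not_le)
  qed (use AGM_less_Q[OF assms(3) \<open>0 \<le> t\<close> \<open>t \<le> 1\<close>] in blast)
  with half_minus_sqrt_le_iff[OF \<open>0 < s\<close> assms(2)] show ?thesis by simp
qed

end
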